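(* Let $0<\theta_1<\dots<\theta_n<2\pi$ and set $\theta_{j+n}=\theta_j+2\pi$. For $A\subset\mathbb{R}$ write $A\ (\mathrm{mod}\ 2\pi)=\{x+2\pi m: x\in A, m\in\mathbb{Z}\}\cap[0,2\pi)$; for $a\in(0,2\pi)$ put $I(x,a)=[x,x+a]\ (\mathrm{mod}\ 2\pi)$ and, for $1\le j\le n$, $J_j(a)=\{x\in[0,2\pi): I(x,a)\subset(\theta_j,\theta_{j+1})\ (\mathrm{mod}\ 2\pi)\}$. For $a_1,\dots,a_k\in(0,2\pi)$ let $$\Sigma_k(a_1,\dots,a_k)=\bigcup_{i_1,\dots,i_k\in\{1,\dots,n\}\text{ all distinct}}\ \prod_{j=1}^kJ_{i_j}(a_j)\subset[0,2\pi)^k.$$ Then for $(y_1,\dots,y_k)\in[0,2\pi)^k$, $(y_1,\dots,y_k)\in\Sigma_k(a_1,\dots,a_k)$ holds if and only if all of the following hold: (i) $I(y_l,a_l)\cap I(y_j,a_j)=\emptyset$ for $1\le l<j\le k$; (ii) $\theta_l\notin I(y_j,a_j)$ for all $1\le j\le k$, $1\le l\le n$; (iii) for all $p,q\in\{1,\dots,k\}$ with $y_p<y_q$, $\{\theta_1,\dots,\theta_n\}\cap(y_p,y_q)\ne\emptyset$ and $\{\theta_1,\dots,\theta_n\}\setminus[y_p,y_q]\neq\emptyset$. *)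

theory Defs
  imports Complex_Main "HOL-Library.FuncSet"
begin

text \<open>Angles theta_1 < ... < theta_n are given as a function theta on indices 1..n;
  theta_{j+n} = theta_j + 2 pi (only needed for j = n+1 here).\<close>
definition theta_ext :: "(nat \<Rightarrow> real) \<Rightarrow> nat \<Rightarrow> nat \<Rightarrow> real" where
  "theta_ext \<theta> n j = (if j \<le> n then \<theta> j else \<theta> (j - n) + 2 * pi)"

definition mod2pi :: "real set \<Rightarrow> real set" where
  "mod2pi A = {x + 2 * pi * of_int m | x m. x \<in> A} \<inter> {0..<2 * pi}"

definition Iarc :: "real \<Rightarrow> real \<Rightarrow> real set" where
  "Iarc x a = mod2pi {x..x + a}"

definition Jset :: "(nat \<Rightarrow> real) \<Rightarrow> nat \<Rightarrow> nat \<Rightarrow> real \<Rightarrow> real set" where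
  "Jset \<theta> n j a = {x \<in> {0..<2 * pi}.
      Iarc x a \<subseteq> mod2pi {theta_ext \<theta> n j <..< theta_ext \<theta> n (Suc j)}}"

text \<open>k-tuples are represented as functions nat => real, using the indices 1..k.\<close>
definition Sigma_k :: "(nat \<Rightarrow> real) \<Rightarrow> nat \<Rightarrow> nat \<Rightarrow> (nat \<Rightarrow> real) \<Rightarrow> (nat \<Rightarrow> real) set" where
  "Sigma_k \<theta> n k a = (\<Union>i \<in> {i. inj_on i {1..k} \<and> i ` {1..k} \<subseteq> {1..n}}.
      Pi {1..k} (\<lambda>j. Jset \<theta> n (i j) (a j)))"

end

(*
  The points theta_1 < ... < theta_n cut the circle into n open gaps: gap i is
  (theta_i, theta_(i+1)) for i < n, and gap n is the one containing 0.  J_i(a) consists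
  of the starting points y of arcs I(y, a) lying inside gap i.  An arc avoiding every
  theta_l stays in the gap of its starting point, so (ii) says exactly that each y_j
  lies in some J_i(a_j).  Two points u < v lie in different gaps iff some theta_l
  lies strictly between them and some theta_l lies outside [u, v], which is (iii);
  and arcs in different gaps are disjoint.  Hence an assignment of gaps to
  y_1, ..., y_k is injective iff (i) and (iii) hold.
*)

theory Submission
  imports Defs
begin

lemma mod2pi_iff:
  assumes "A \<subseteq> {0..<4*pi}"
  shows "t \<in> mod2pi A \<longleftrightarrow> t \<in> {0..<2*pi} \<and> (t \<in> A \<or> t + 2*pi \<in> A)"
proof
  assume "t \<in> mod2pi A"
  then obtain x m where x: "x \<in> A" "t = x + 2*pi*of_int m" and t: "0 \<le> t" "t < 2*pi"
    unfolding mod2pi_def by auto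
  have "0 \<le> x" "x < 4*pi" using x(1) assms by auto
  then have "2*pi*of_int m < 2*pi*of_int 1" "2*pi*of_int (-2) < 2*pi*of_int m"
    using x(2) t by linarith+
  then have "m < 1" "-2 < m"
    by (metis mult_less_cancel_left_pos of_int_less_iff pi_gt_zero zero_less_mult_iff zero_less_numeral)+
  then have "m = 0 \<or> m = -1" by linarith
  then show "t \<in> {0..<2*pi} \<and> (t \<in> A \<or> t + 2*pi \<in> A)"
    using x t by auto
next
  assume t: "t \<in> {0..<2*pi} \<and> (t \<in> A \<or> t + 2*pi \<in> A)"
  have "t = t + 2*pi*of_int 0" "t = (t + 2*pi) + 2*pi*of_int (-1)" by simp_all
  then show "t \<in> mod2pi A"
    using t unfolding mod2pi_def by blast
qed

lemma Iarc_iff: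
  assumes "0 \<le> y" "y < 2*pi" "a < 2*pi"
  shows "t \<in> Iarc y a \<longleftrightarrow> t \<in> {0..<2*pi} \<and> (t \<in> {y..y + a} \<or> t + 2*pi \<in> {y..y + a})"
  unfolding Iarc_def using assms by (subst mod2pi_iff) auto

lemma Iarc_subset: "Iarc y a \<subseteq> {0..<2*pi}"
  by (auto simp: Iarc_def mod2pi_def)

lemma Iarc_self:
  assumes "0 \<le> y" "y < 2*pi" "0 \<le> a"
  shows "y \<in> Iarc y a"
proof -
  have "y = y + 2*pi*of_int 0" by simp
  then show ?thesis using assms unfolding Iarc_def mod2pi_def by fastforce
qed

lemma mem_Sigma_k_iff:
  "y \<in> Sigma_k \<theta> n k a \<longleftrightarrow>
    (\<exists>f. inj_on f {1..k} \<and> (\<forall>j\<in>{1..k}. f j \<in> {1..n} \<and> y j \<in> Jset \<theta> n (f j) (a j)))"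
  by (auto simp: Sigma_k_def Pi_iff image_subset_iff)

locale circle_partition =
  fixes \<theta> :: "nat \<Rightarrow> real" and n :: nat
  assumes n_pos: "1 \<le> n"
    and theta_strict_mono: "strict_mono_on {1..n} \<theta>"
    and theta_first_pos: "0 < \<theta> 1"
    and theta_last_less: "\<theta> n < 2 * pi"
begin

lemmas theta_less_iff = strict_mono_on_less[OF theta_strict_mono]
lemmas theta_le_iff = strict_mono_on_less_eq[OF theta_strict_mono]

lemma theta_bounds:
  assumes "l \<in> {1..n}"
  shows "\<theta> 1 \<le> \<theta> l" "\<theta> l \<le> \<theta> n" "0 < \<theta> l" "\<theta> l < 2*pi"
proof -
  show "\<theta> 1 \<le> \<theta> l" "\<theta> l \<le> \<theta> n" using assms n_pos by (auto simp: theta_le_iff)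
  then show "0 < \<theta> l" "\<theta> l < 2*pi" using theta_first_pos theta_last_less by linarith+
qed

definition in_gap :: "nat \<Rightarrow> real \<Rightarrow> bool" where
  "in_gap i t \<longleftrightarrow> (if i < n then \<theta> i < t \<and> t < \<theta> (Suc i) else t < \<theta> 1 \<or> \<theta> n < t)"

definition separated :: "real \<Rightarrow> real \<Rightarrow> bool" where
  "separated u v \<longleftrightarrow> \<theta> ` {1..n} \<inter> {u<..<v} \<noteq> {} \<and> \<theta> ` {1..n} - {u..v} \<noteq> {}"

lemma separated_iff:
  "separated u v \<longleftrightarrow>
    (\<exists>l\<in>{1..n}. u < \<theta> l \<and> \<theta> l < v) \<and> (\<exists>l\<in>{1..n}. \<theta> l < u \<or> v < \<theta> l)"
  by (auto simp: separated_def not_le)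

lemma mod2pi_gap_iff:
  assumes "i \<in> {1..n}"
  shows "t \<in> mod2pi {theta_ext \<theta> n i<..<theta_ext \<theta> n (Suc i)} \<longleftrightarrow>
    t \<in> {0..<2*pi} \<and> in_gap i t"
proof (cases "i < n")
  case True
  then have "0 < \<theta> i" "\<theta> (Suc i) < 2*pi"
    using assms theta_bounds[of i] theta_bounds[of "Suc i"] by auto
  with True show ?thesis
    by (subst mod2pi_iff) (auto simp: theta_ext_def in_gap_def)
next
  case False
  then have "i = n" using assms by auto
  with theta_bounds[of 1] theta_bounds[of n] n_pos show ?thesis
    by (subst mod2pi_iff) (auto simp: theta_ext_def in_gap_def)
qed

lemma theta_not_in_gap:
  assumes "i \<in> {1..n}" "l \<in> {1..n}"
  shows "\<not> in_gap i (\<theta> l)"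
  using assms theta_bounds[OF assms(2)] by (auto simp: in_gap_def theta_less_iff)

lemma in_gap_unique:
  assumes "i \<in> {1..n}" "i' \<in> {1..n}" "in_gap i t" "in_gap i' t"
  shows "i = i'"
  using assms
proof (induction i i' rule: linorder_less_wlog)
  case (less i i')
  then have "\<theta> (Suc i) \<le> \<theta> i'" by (simp add: theta_le_iff)
  with less theta_bounds[of i] theta_bounds[of i'] show ?case by (auto simp: in_gap_def split: if_splits)
qed auto

lemma in_gap_exists:
  assumes "t \<notin> \<theta> ` {1..n}"
  obtains i where "i \<in> {1..n}" "in_gap i t"
proof (cases "t < \<theta> 1 \<or> \<theta> n < t")
  case True
  then show ?thesis using that[of n] n_pos by (auto simp: in_gap_def)
next
  case False
  define below where "below = {l \<in> {1..n}. \<theta> l < t}"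
  define i where "i = Max below"
  have "1 \<in> below" using False assms n_pos by (force simp: below_def)
  moreover have fin: "finite below" by (simp add: below_def)
  ultimately have "i \<in> below" unfolding i_def using Max_in by blast
  then have i: "i \<in> {1..n}" "\<theta> i < t" by (auto simp: below_def)
  with False have "i < n" using theta_less_iff[of i n] by force
  moreover have "Suc i \<notin> below" using Max_ge[OF fin, of "Suc i"] by (auto simp: i_def)
  ultimately have "t < \<theta> (Suc i)" using assms by (force simp: below_def)
  with i \<open>i < n\<close> show ?thesis using that[of i] by (simp add: in_gap_def)
qed

lemma not_separated_same_gap:
  assumes "i \<in> {1..n}" "in_gap i u" "in_gap i v" "u < v"
  shows "\<not> separated u v"
proof
  assume "separated u v"
  then obtain l m where l: "l \<in> {1..n}" "u < \<theta> l" "\<theta> l < v"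
    and m: "m \<in> {1..n}" "\<theta> m < u \<or> v < \<theta> m"
    by (auto simp: separated_iff)
  show False
  proof (cases "i < n")
    case True
    then have "\<theta> i < \<theta> l" "\<theta> l < \<theta> (Suc i)"
      using assms l by (auto simp: in_gap_def)
    with True assms(1) l(1) show False by (simp add: theta_less_iff)
  next
    case False
    with assms l m theta_bounds[OF l(1)] theta_bounds[OF m(1)] show False
      by (auto simp: in_gap_def)
  qed
qed

lemma separated_different_gaps:
  assumes "i \<in> {1..n}" "i' \<in> {1..n}" "i \<noteq> i'" "in_gap i u" "in_gap i' v" "u < v"
  shows "separated u v"
proof -
  have "\<exists>l\<in>{1..n}. \<exists>m\<in>{1..n}. u < \<theta> l \<and> \<theta> l < v \<and> (\<theta> m < u \<or> v < \<theta> m)"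
  proof (cases "i < n")
    case True
    then have u: "\<theta> i < u" "u < \<theta> (Suc i)" and Suc_i: "Suc i \<in> {1..n}"
      using assms by (auto simp: in_gap_def)
    have "\<theta> (Suc i) < v"
    proof (cases "i' < n")
      case True
      then have v: "\<theta> i' < v" "v < \<theta> (Suc i')"
        using assms by (auto simp: in_gap_def)
      have "\<not> i' < i"
      proof
        assume "i' < i"
        then have "\<theta> (Suc i') \<le> \<theta> i" using assms(1) by (simp add: theta_le_iff)
        with u v \<open>u < v\<close> show False by linarith
      qed
      with \<open>i \<noteq> i'\<close> have "Suc i \<le> i'" by simp
      with Suc_i assms(2) have "\<theta> (Suc i) \<le> \<theta> i'" by (simp add: theta_le_iff)
      with v show ?thesis by linarith
    next
      case False
      with assms u theta_bounds[OF assms(1)] theta_bounds[OF Suc_i] show ?thesis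
        by (auto simp: in_gap_def)
    qed
    with u Suc_i assms(1) show ?thesis by blast
  next
    case False
    with assms(1-3) have "i = n" "i' < n" by auto
    then have u: "u < \<theta> 1 \<or> \<theta> n < u" and v: "\<theta> i' < v" "v < \<theta> (Suc i')"
      using assms(4,5) by (auto simp: in_gap_def)
    have "\<theta> 1 \<le> \<theta> i'" "\<theta> (Suc i') \<le> \<theta> n"
      using theta_bounds[of i'] theta_bounds[of "Suc i'"] assms(2) \<open>i' < n\<close> by auto
    with u v \<open>u < v\<close> have "u < \<theta> 1" "\<theta> 1 < v" "v < \<theta> n" by linarith+
    moreover have "1 \<in> {1..n}" "n \<in> {1..n}" using n_pos by auto
    ultimately show ?thesis by blast
  qed
  then show ?thesis by (auto simp: separated_iff)
qed

lemma separated_iff_gap_neq: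
  assumes "i \<in> {1..n}" "i' \<in> {1..n}" "in_gap i u" "in_gap i' v" "u < v"
  shows "separated u v \<longleftrightarrow> i \<noteq> i'"
  using assms not_separated_same_gap[of i u v] separated_different_gaps[of i i' u v] by blast

lemma Jset_iff:
  assumes "i \<in> {1..n}"
  shows "y \<in> Jset \<theta> n i a \<longleftrightarrow> y \<in> {0..<2*pi} \<and> (\<forall>t\<in>Iarc y a. in_gap i t)"
  using mod2pi_gap_iff[OF assms] Iarc_subset[of y a] by (auto simp: Jset_def subset_iff)

lemma in_gap_of_Jset:
  assumes "i \<in> {1..n}" "y \<in> Jset \<theta> n i a" "0 \<le> a"
  shows "in_gap i y"
  using assms Iarc_self by (auto simp: Jset_iff)

lemma Jset_Iarc_disjoint:
  assumes "i \<in> {1..n}" "i' \<in> {1..n}" "i \<noteq> i'" "y \<in> Jset \<theta> n i a" "y' \<in> Jset \<theta> n i' a'"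
  shows "Iarc y a \<inter> Iarc y' a' = {}"
proof -
  have "in_gap i t" "in_gap i' t" if "t \<in> Iarc y a" "t \<in> Iarc y' a'" for t
    using assms(4,5) that by (simp_all add: Jset_iff[OF assms(1)] Jset_iff[OF assms(2)])
  with in_gap_unique assms(1-3) show ?thesis by blast
qed

lemma theta_notin_Iarc_of_Jset:
  assumes "i \<in> {1..n}" "y \<in> Jset \<theta> n i a" "l \<in> {1..n}"
  shows "\<theta> l \<notin> Iarc y a"
  using assms(2) theta_not_in_gap[OF assms(1,3)] by (auto simp: Jset_iff[OF assms(1)])

lemma separated_iff_Jset_index_neq:
  assumes "i \<in> {1..n}" "i' \<in> {1..n}" "y \<in> Jset \<theta> n i a" "y' \<in> Jset \<theta> n i' a'"
    and "0 \<le> a" "0 \<le> a'" "y < y'"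
  shows "separated y y' \<longleftrightarrow> i \<noteq> i'"
  using separated_iff_gap_neq[OF assms(1,2) in_gap_of_Jset[OF assms(1,3,5)]
      in_gap_of_Jset[OF assms(2,4,6)] assms(7)] .

lemma Iarc_in_gap_of_start:
  assumes "0 \<le> y" "y < 2*pi" "a < 2*pi"
    and avoid: "\<forall>l\<in>{1..n}. \<theta> l \<notin> Iarc y a"
    and i: "i \<in> {1..n}" "in_gap i y"
    and t: "t \<in> Iarc y a"
  shows "in_gap i t"
proof -
  have arc: "\<theta> l \<notin> {y..y + a}" "\<theta> l + 2*pi \<notin> {y..y + a}" if "l \<in> {1..n}" for l
    using avoid that theta_bounds[OF that] Iarc_iff[OF assms(1-3), of "\<theta> l"] by auto
  have "t \<notin> \<theta> ` {1..n}" using avoid t by auto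
  then obtain i' where i': "i' \<in> {1..n}" "in_gap i' t"
    by (rule in_gap_exists)
  from t have "0 \<le> t" "t \<in> {y..y + a} \<or> t + 2*pi \<in> {y..y + a}"
    using Iarc_iff[OF assms(1-3)] by auto
  then consider (same) "t = y" | (after) "y < t" "t \<le> y + a" | (before) "t < y" "t + 2*pi \<le> y + a"
    using assms(3) by fastforce
  then show ?thesis
  proof cases
    case same
    with i i' in_gap_unique show ?thesis by blast
  next
    case after
    have "\<not> separated y t"
    proof
      assume "separated y t"
      then obtain l where l: "l \<in> {1..n}" "y < \<theta> l" "\<theta> l < t"
        by (auto simp: separated_iff)
      with after arc(1)[OF l(1)] show False by auto
    qed
    with separated_iff_gap_neq[OF i(1) i'(1) i(2) i'(2) \<open>y < t\<close>] i'(2) show ?thesis by simp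
  next
    case before
    \<comment> \<open>the arc wraps around through 2 pi and covers both [y, 2 pi) and [0, t]\<close>
    have "\<not> separated t y"
    proof
      assume "separated t y"
      then obtain m where m: "m \<in> {1..n}" "\<theta> m < t \<or> y < \<theta> m"
        by (auto simp: separated_iff)
      with before \<open>0 \<le> t\<close> arc[OF m(1)] theta_bounds[OF m(1)] assms(2) show False by auto
    qed
    with separated_iff_gap_neq[OF i'(1) i(1) i'(2) i(2) \<open>t < y\<close>] i'(2) show ?thesis by simp
  qed
qed

lemma Jset_index_exists:
  assumes "0 \<le> y" "y < 2*pi" "0 \<le> a" "a < 2*pi"
    and avoid: "\<forall>l\<in>{1..n}. \<theta> l \<notin> Iarc y a"
  shows "\<exists>i\<in>{1..n}. y \<in> Jset \<theta> n i a"
proof -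
  have "y \<notin> \<theta> ` {1..n}" using avoid Iarc_self[OF assms(1-3)] by auto
  then obtain i where i: "i \<in> {1..n}" "in_gap i y"
    by (rule in_gap_exists)
  with assms have "y \<in> Jset \<theta> n i a"
    by (auto simp: Jset_iff intro: Iarc_in_gap_of_start)
  with i(1) show ?thesis ..
qed

lemma inj_on_Jset_index_iff:
  fixes f :: "'b::linorder \<Rightarrow> nat"
  assumes f: "\<forall>j\<in>K. f j \<in> {1..n} \<and> y j \<in> Jset \<theta> n (f j) (a j)" and a: "\<forall>j\<in>K. 0 \<le> a j"
  shows "inj_on f K \<longleftrightarrow>
    (\<forall>p\<in>K. \<forall>q\<in>K. p < q \<longrightarrow> Iarc (y p) (a p) \<inter> Iarc (y q) (a q) = {}) \<and>
    (\<forall>p\<in>K. \<forall>q\<in>K. y p < y q \<longrightarrow> separated (y p) (y q))"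
    (is "_ \<longleftrightarrow> ?disjoint \<and> ?separated")
proof -
  have separated_iff_neq: "separated (y p) (y q) \<longleftrightarrow> f p \<noteq> f q"
    if "p \<in> K" "q \<in> K" "y p < y q" for p q
    using f a that by (intro separated_iff_Jset_index_neq) auto
  show ?thesis
  proof
    assume inj: "inj_on f K"
    have ?disjoint
    proof (intro ballI impI)
      fix p q assume "p \<in> K" "q \<in> K" "p < q"
      with f inj show "Iarc (y p) (a p) \<inter> Iarc (y q) (a q) = {}"
        by (intro Jset_Iarc_disjoint[of "f p" "f q"]) (auto dest: inj_onD)
    qed
    moreover have ?separated
      using inj separated_iff_neq by (auto dest: inj_onD)
    ultimately show "?disjoint \<and> ?separated" ..
  next
    assume conds: "?disjoint \<and> ?separated"
    have base_points_neq: "y p \<noteq> y q" if "p \<in> K" "q \<in> K" "p < q" for p q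
    proof
      assume "y p = y q"
      moreover have "y p \<in> Iarc (y p) (a p)" "y q \<in> Iarc (y q) (a q)"
        using f a that Iarc_self by (auto simp: Jset_def)
      moreover have "Iarc (y p) (a p) \<inter> Iarc (y q) (a q) = {}"
        using conds that by blast
      ultimately show False by auto
    qed
    show "inj_on f K"
    proof (rule inj_onI, rule ccontr)
      fix p q assume pq: "p \<in> K" "q \<in> K" "f p = f q" "p \<noteq> q"
      then consider "y p < y q" | "y q < y p"
        using base_points_neq by (metis linorder_neq_iff)
      then show False
      proof cases
        case 1
        with pq conds separated_iff_neq[of p q] show False by auto
      next
        case 2
        with pq conds separated_iff_neq[of q p] show False by auto
      qed
    qed
  qed
qed

end

theorem lemma3:
  fixes \<theta> :: "nat \<Rightarrow> real" and n k :: nat and a y :: "nat \<Rightarrow> real"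
  assumes "n \<ge> 1"
    and "strict_mono_on {1..n} \<theta>"
    and "0 < \<theta> 1" and "\<theta> n < 2 * pi"
    and "\<forall>j\<in>{1..k}. 0 < a j \<and> a j < 2 * pi"
    and "\<forall>j\<in>{1..k}. 0 \<le> y j \<and> y j < 2 * pi"
  shows "y \<in> Sigma_k \<theta> n k a \<longleftrightarrow>
    (\<forall>l\<in>{1..k}. \<forall>j\<in>{1..k}. l < j \<longrightarrow> Iarc (y l) (a l) \<inter> Iarc (y j) (a j) = {}) \<and>
    (\<forall>j\<in>{1..k}. \<forall>l\<in>{1..n}. \<theta> l \<notin> Iarc (y j) (a j)) \<and>
    (\<forall>p\<in>{1..k}. \<forall>q\<in>{1..k}. y p < y q \<longrightarrow>
        \<theta> ` {1..n} \<inter> {y p<..<y q} \<noteq> {} \<and> \<theta> ` {1..n} - {y p..y q} \<noteq> {})"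
    (is "_ \<longleftrightarrow> ?disjoint \<and> ?avoid \<and> ?separated")
proof -
  interpret circle_partition \<theta> n
    using assms(1-4) by unfold_locales
  have a: "\<forall>j\<in>{1..k}. 0 \<le> a j" using assms(5) by auto
  show ?thesis
  proof
    assume "y \<in> Sigma_k \<theta> n k a"
    then obtain f where "inj_on f {1..k}"
      and f: "\<forall>j\<in>{1..k}. f j \<in> {1..n} \<and> y j \<in> Jset \<theta> n (f j) (a j)"
      by (auto simp: mem_Sigma_k_iff)
    moreover have ?avoid
      using f theta_notin_Iarc_of_Jset by blast
    ultimately show "?disjoint \<and> ?avoid \<and> ?separated"
      using inj_on_Jset_index_iff[OF f a] by (simp add: separated_def)
  next
    assume conds: "?disjoint \<and> ?avoid \<and> ?separated"
    have "\<forall>j\<in>{1..k}. \<exists>i\<in>{1..n}. y j \<in> Jset \<theta> n i (a j)"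
      using conds assms(5,6) a by (intro ballI Jset_index_exists) auto
    then obtain f where f: "\<forall>j\<in>{1..k}. f j \<in> {1..n} \<and> y j \<in> Jset \<theta> n (f j) (a j)"
      by metis
    moreover have "inj_on f {1..k}"
      using inj_on_Jset_index_iff[OF f a] conds by (simp add: separated_def)
    ultimately show "y \<in> Sigma_k \<theta> n k a"
      by (auto simp: mem_Sigma_k_iff)
  qed
qed

end
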